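(* Let $\mathbb{S}\in\mathbb{Z}^{N_X\times N_e}$, $\mathcal{X}=\mathbb{R}^{N_X}_{>0}$, and $\{\Psi^*_x\}_{x\in\mathcal{X}}$ a family of dissipation functions on $\mathbb{R}^{N_e}$ with conjugates $\Psi_x$. Fix $x\in\mathcal{X}$. Let $\tilde{\mathcal{T}}:=\mathrm{Im}\,\mathbb{S}\subset\mathbb{R}^{N_X}$ and $\tilde{\mathcal{T}}^*:=\mathbb{R}^{N_X}/\mathrm{Ker}\,\mathbb{S}^T$, paired by $\langle v,u\rangle$ (well defined since $\mathrm{Im}\,\mathbb{S}\perp\mathrm{Ker}\,\mathbb{S}^T$). For $v\in\tilde{\mathcal{T}}$ let $j^\dagger(x,v)$ be the unique minimizer of $\Psi_x(j)$ over $\{j\in\mathbb{R}^{N_e}:-\mathbb{S}j=v\}$, and define $$\tilde{\Psi}_x(v):=\Psi_x\big(j^\dagger(x,v)\big)\ (v\in\tilde{\mathcal{T}}),\qquad \tilde{\Psi}^*_x(u):=\Psi^*_x\big(-\mathbb{S}^Tu\big)\ (u\in\tilde{\mathcal{T}}^* ).$$ Then $\tilde{\Psi}_x$ and $\tilde{\Psi}^*_x$ are Legendre–Fenchel conjugates of each other, $\tilde{\Psi}_x(v)=\max_{u\in\tilde{\mathcal{T}}^*}[\langle v,u\rangle-\tilde{\Psi}^*_x(u)]$ and $\tilde{\Psi}^*_x(u)=\max_{v\in\tilde{\mathcal{T}}}[\langle v,u\rangle-\tilde{\Psi}_x(v)]$; their Legendre transformations $v\mapsto\partial\tilde{\Psi}_x(v)$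 and $u\mapsto\partial\tilde{\Psi}^*_x(u)$ are mutually inverse bijections between $\tilde{\mathcal{T}}$ and $\tilde{\mathcal{T}}^*$, where $u=\partial\tilde\Psi_x(v)$ is the class with $\nabla\Psi_x(j^\dagger(x,v))=-\mathbb{S}^Tu$ and $\partial\tilde\Psi^*_x(u)=-\mathbb{S}\nabla\Psi^*_x(-\mathbb{S}^Tu)$; and both $\tilde{\Psi}_x$ and $\tilde{\Psi}^*_x$ are dissipation functions (strictly convex, $1$-coercive, symmetric under sign change, and vanishing at $0$). That is, the dissipation functions on the edge spaces induce a dually flat structure on the restricted tangent and cotangent spaces $(\tilde{\mathcal{T}},\tilde{\mathcal{T}}^* )$.
   Context: A dissipation function on $\mathbb{R}^{N_e}$ is a strictly convex, continuously differentiable, $1$-coercive ($\psi(f)/\|f\|\to\infty$ as $\|f\|\to\infty$), even ($\psi(-f)=\psi(f)$) function $\psi$ with $\psi(0)=0$. $\Psi_x(j):=\max_f[\langle j,f\rangle-\Psi^*_x(f)]$ is the Legendre–Fenchel conjugate of $\Psi^*_x$ (also a dissipation function), and $\nabla\Psi_x,\nabla\Psi^*_x$ are mutually inverse bijections of $\mathbb{R}^{N_e}$. $\langle\cdot,\cdot\rangle$ is the standard pairing. *)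

theory Defs
  imports "HOL-Analysis.Analysis"
begin

definition strictly_convex_on :: "'a::real_vector set \<Rightarrow> ('a \<Rightarrow> real) \<Rightarrow> bool" where
  "strictly_convex_on A f \<longleftrightarrow>
     (\<forall>x\<in>A. \<forall>y\<in>A. x \<noteq> y \<longrightarrow>
        (\<forall>t::real. 0 < t \<and> t < 1 \<longrightarrow> f ((1 - t) *\<^sub>R x + t *\<^sub>R y) < (1 - t) * f x + t * f y))"

definition one_coercive :: "('a::real_normed_vector \<Rightarrow> real) \<Rightarrow> bool" where
  "one_coercive \<psi> \<longleftrightarrow> filterlim (\<lambda>f. \<psi> f / norm f) at_top at_infinity"

definition C1_fun :: "('a::euclidean_space \<Rightarrow> real) \<Rightarrow> bool" where
  "C1_fun \<psi> \<longleftrightarrow> (\<exists>g. (\<forall>f. (\<psi> has_derivative (\<lambda>h. g f \<bullet> h)) (at f)) \<and> continuous_on UNIV g)"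

definition grad :: "('a::euclidean_space \<Rightarrow> real) \<Rightarrow> 'a \<Rightarrow> 'a" where
  "grad \<psi> f = (THE g. (\<psi> has_derivative (\<lambda>h. g \<bullet> h)) (at f))"

definition dissipation :: "('a::euclidean_space \<Rightarrow> real) \<Rightarrow> bool" where
  "dissipation \<psi> \<longleftrightarrow> strictly_convex_on UNIV \<psi> \<and> C1_fun \<psi> \<and> one_coercive \<psi>
      \<and> (\<forall>f. \<psi> (- f) = \<psi> f) \<and> \<psi> 0 = 0"

(* Legendre-Fenchel conjugate (the sup is attained, i.e. a max, for dissipation functions) *)
definition LF_conj :: "('a::real_inner \<Rightarrow> real) \<Rightarrow> 'a \<Rightarrow> real" where
  "LF_conj \<psi>s j = (SUP f. j \<bullet> f - \<psi>s f)"

definition is_max_of :: "'a set \<Rightarrow> ('a \<Rightarrow> real) \<Rightarrow> real \<Rightarrow> bool" where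
  "is_max_of A g m \<longleftrightarrow> (\<exists>a\<in>A. g a = m) \<and> (\<forall>a\<in>A. g a \<le> m)"

definition tang :: "real^'e^'x \<Rightarrow> (real^'x) set" where
  "tang S = range (\<lambda>j. S *v j)"

(* the coset u + Ker S^T, an element of R^{N_X} / Ker S^T *)
definition qcls :: "real^'e^'x \<Rightarrow> real^'x \<Rightarrow> (real^'x) set" where
  "qcls S u = {u'. transpose S *v u' = transpose S *v u}"

definition cotang :: "real^'e^'x \<Rightarrow> (real^'x) set set" where
  "cotang S = range (qcls S)"

definition rep :: "'a set \<Rightarrow> 'a" where
  "rep U = (SOME u. u \<in> U)"

definition dpair :: "real^'x \<Rightarrow> (real^'x) set \<Rightarrow> real" where
  "dpair v U = v \<bullet> rep U"

definition qnorm :: "(real^'x) set \<Rightarrow> real" where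
  "qnorm U = Inf (norm ` U)"

definition is_jdag :: "(real^'e \<Rightarrow> real) \<Rightarrow> real^'e^'x \<Rightarrow> real^'x \<Rightarrow> real^'e \<Rightarrow> bool" where
  "is_jdag \<Psi> S v j \<longleftrightarrow> - (S *v j) = v \<and> (\<forall>j'. - (S *v j') = v \<longrightarrow> \<Psi> j \<le> \<Psi> j')"

definition jdag :: "(real^'e \<Rightarrow> real) \<Rightarrow> real^'e^'x \<Rightarrow> real^'x \<Rightarrow> real^'e" where
  "jdag \<Psi> S v = (THE j. is_jdag \<Psi> S v j)"

definition tPsi :: "(real^'e \<Rightarrow> real) \<Rightarrow> real^'e^'x \<Rightarrow> real^'x \<Rightarrow> real" where
  "tPsi \<Psi> S v = \<Psi> (jdag \<Psi> S v)"

definition tPsistar :: "(real^'e \<Rightarrow> real) \<Rightarrow> real^'e^'x \<Rightarrow> (real^'x) set \<Rightarrow> real" where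
  "tPsistar \<Psi>s S U = \<Psi>s (- (transpose S *v rep U))"

definition dtPsi :: "(real^'e \<Rightarrow> real) \<Rightarrow> real^'e^'x \<Rightarrow> real^'x \<Rightarrow> (real^'x) set" where
  "dtPsi \<Psi> S v = (THE U. U \<in> cotang S \<and> grad \<Psi> (jdag \<Psi> S v) = - (transpose S *v rep U))"

definition dtPsistar :: "(real^'e \<Rightarrow> real) \<Rightarrow> real^'e^'x \<Rightarrow> (real^'x) set \<Rightarrow> real^'x" where
  "dtPsistar \<Psi>s S U = - (S *v grad \<Psi>s (- (transpose S *v rep U)))"

end

(* The conjugate Psi of a dissipation function Psi* is again one: the gradient g of Psi* is a
   homeomorphism of the edge space (strict convexity makes it injective, coercivity surjective
   with a locally bounded inverse), and inv g is the gradient of Psi.  Minimising Psi over the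
   fibre {j. - S j = v} of v in Im S has a unique solution jdag, characterised by the Lagrange
   condition grad Psi (jdag) = - S^T u; then jdag = g (- S^T u) and v = - S g (- S^T u).  So the
   Legendre maps v |-> [u] and [u] |-> - S g (- S^T u) are mutually inverse, and since
   <v, u> = <jdag, - S^T u>, the Fenchel-Young (in)equality on edges becomes the restricted
   duality.  Coercivity of the restricted Psi* holds because S^T is bounded below on Im S,
   a complement of Ker S^T. *)

theory Submission
  imports Defs
begin

lemma grad_eqI:
  fixes \<psi> :: "'a::euclidean_space \<Rightarrow> real"
  assumes "(\<psi> has_derivative (\<lambda>h. a \<bullet> h)) (at f)"
  shows "grad \<psi> f = a"
  unfolding grad_def
proof (rule the_equality)
  fix b assume "(\<psi> has_derivative (\<lambda>h. b \<bullet> h)) (at f)"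
  from has_derivative_unique[OF this assms] have "b \<bullet> (b - a) = a \<bullet> (b - a)" by metis
  then have "(b - a) \<bullet> (b - a) = 0" by (simp add: inner_diff_left)
  then show "b = a" by simp
qed (rule assms)

lemma DERIV_squeeze_at_0:
  fixes p q :: "real \<Rightarrow> real"
  assumes lower: "\<And>t. p 0 + t * D \<le> p t" and upper: "\<And>t. p t \<le> q t" and "q 0 = p 0"
    and "(q has_real_derivative D) (at 0)"
  shows "(p has_real_derivative D) (at 0)"
proof -
  have "((\<lambda>t. (q t - q 0) / t - D) \<longlongrightarrow> 0) (at 0)"
    using assms(4) by (simp add: DERIV_def LIM_zero)
  then have q_lim: "((\<lambda>t. norm ((q t - q 0) / t - D)) \<longlongrightarrow> 0) (at 0)"
    by (rule tendsto_norm_zero)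
  have "norm ((p t - p 0) / t - D) \<le> norm ((q t - q 0) / t - D)" if "t \<noteq> 0" for t
  proof -
    have "(p t - p 0) / t - D = (p t - p 0 - t * D) / t" "(q t - q 0) / t - D = (q t - q 0 - t * D) / t"
      using that by (simp_all add: field_simps)
    moreover have "\<bar>p t - p 0 - t * D\<bar> \<le> \<bar>q t - q 0 - t * D\<bar>"
      using lower[of t] upper[of t] \<open>q 0 = p 0\<close> by linarith
    ultimately show ?thesis by (simp add: divide_right_mono)
  qed
  then have "((\<lambda>t. (p t - p 0) / t - D) \<longlongrightarrow> 0) (at 0)"
    by (intro Lim_null_comparison[OF _ q_lim]) (auto simp: eventually_at_filter)
  then show ?thesis by (simp add: DERIV_def LIM_zero_iff)
qed

locale legendre_function =
  fixes \<phi> :: "'a::euclidean_space \<Rightarrow> real" and g :: "'a \<Rightarrow> 'a"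
  assumes strictly_convex: "strictly_convex_on UNIV \<phi>"
    and has_derivative_g: "\<And>f. (\<phi> has_derivative (\<lambda>h. g f \<bullet> h)) (at f)"
    and continuous_g: "continuous_on UNIV g"
    and coercive: "one_coercive \<phi>"
begin

abbreviation \<Phi> :: "'a \<Rightarrow> real" where "\<Phi> \<equiv> LF_conj \<phi>"

lemma continuous_phi: "continuous_on A \<phi>"
  by (meson continuous_at_imp_continuous_on has_derivative_g has_derivative_continuous)

lemma grad_phi: "grad \<phi> f = g f"
  by (rule grad_eqI[OF has_derivative_g])

lemma strict_convex_ineq:
  "x \<noteq> y \<Longrightarrow> 0 < t \<Longrightarrow> t < 1 \<Longrightarrow> \<phi> ((1 - t) *\<^sub>R x + t *\<^sub>R y) < (1 - t) * \<phi> x + t * \<phi> y"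
  using strictly_convex unfolding strictly_convex_on_def by blast

lemma convex_phi: "convex_on UNIV \<phi>"
proof (rule convex_onI)
  fix t :: real and x y assume "0 < t" "t < 1"
  then show "\<phi> ((1 - t) *\<^sub>R x + t *\<^sub>R y) \<le> (1 - t) * \<phi> x + t * \<phi> y"
    using strict_convex_ineq[of x y t] by (cases "x = y") (simp_all add: algebra_simps)
qed simp

lemma coercive_bound: "\<exists>R. \<forall>f. R \<le> norm f \<longrightarrow> M * norm f \<le> \<phi> f"
proof -
  have "eventually (\<lambda>f. M \<le> \<phi> f / norm f) at_infinity"
    using coercive unfolding one_coercive_def filterlim_at_top by blast
  then obtain b where b: "\<And>f. b \<le> norm f \<Longrightarrow> M \<le> \<phi> f / norm f"
    unfolding eventually_at_infinity by blast
  have "M * norm f \<le> \<phi> f" if "max b 1 \<le> norm f" for f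
  proof -
    have "0 < norm f" using that by linarith
    then show ?thesis using b[of f] that by (simp add: pos_le_divide_eq)
  qed
  then show ?thesis by (intro exI[of _ "max b 1"]) simp
qed

lemma gradient_inequality: "\<phi> f + g f \<bullet> (f' - f) \<le> \<phi> f'"
proof -
  define p where "p t = \<phi> (f + t *\<^sub>R (f' - f))" for t :: real
  have "convex_on UNIV p"
  proof (rule convex_onI)
    fix t x y :: real assume "0 < t" "t < 1"
    moreover have "f + ((1 - t) * x + t * y) *\<^sub>R (f' - f)
        = (1 - t) *\<^sub>R (f + x *\<^sub>R (f' - f)) + t *\<^sub>R (f + y *\<^sub>R (f' - f))"
      by (simp add: algebra_simps)
    ultimately show "p ((1 - t) *\<^sub>R x + t *\<^sub>R y) \<le> (1 - t) * p x + t * p y"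
      unfolding p_def using convex_onD[OF convex_phi, of t "f + x *\<^sub>R (f' - f)" "f + y *\<^sub>R (f' - f)"]
      by simp
  qed simp
  moreover have "(p has_real_derivative g f \<bullet> (f' - f)) (at 0)"
  proof -
    have "((\<lambda>t. f + t *\<^sub>R (f' - f)) has_derivative (\<lambda>t. t *\<^sub>R (f' - f))) (at 0)"
      by (auto intro!: derivative_eq_intros)
    from has_derivative_compose[OF this has_derivative_g]
    have "(p has_derivative (\<lambda>t. g f \<bullet> (t *\<^sub>R (f' - f)))) (at 0)"
      unfolding p_def o_def by simp
    then show ?thesis by (simp add: has_field_derivative_def mult_commute_abs)
  qed
  ultimately have "g f \<bullet> (f' - f) * (1 - 0) \<le> p 1 - p 0"
    by (intro convex_on_imp_above_tangent) auto
  then show ?thesis unfolding p_def by simp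
qed

lemma g_eq_iff_maximizer: "g f = j \<longleftrightarrow> (\<forall>f'. j \<bullet> f' - \<phi> f' \<le> j \<bullet> f - \<phi> f)"
proof
  assume "g f = j"
  show "\<forall>f'. j \<bullet> f' - \<phi> f' \<le> j \<bullet> f - \<phi> f"
  proof
    fix f' show "j \<bullet> f' - \<phi> f' \<le> j \<bullet> f - \<phi> f"
      using gradient_inequality[of f f'] \<open>g f = j\<close> by (simp add: inner_diff_right)
  qed
next
  assume max: "\<forall>f'. j \<bullet> f' - \<phi> f' \<le> j \<bullet> f - \<phi> f"
  have deriv: "((\<lambda>f. j \<bullet> f - \<phi> f) has_derivative (\<lambda>h. j \<bullet> h - g f \<bullet> h)) (at f)"
    by (intro has_derivative_diff has_derivative_g) (auto intro!: derivative_eq_intros)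
  have "(\<lambda>h. j \<bullet> h - g f \<bullet> h) = (\<lambda>h. 0)"
    by (rule differential_zero_maxmin[OF _ _ deriv, of UNIV]) (use max in auto)
  then have "(j - g f) \<bullet> (j - g f) = 0" by (metis inner_diff_left)
  then show "g f = j" by simp
qed

lemma maximizer_exists: "\<exists>f. \<forall>f'. j \<bullet> f' - \<phi> f' \<le> j \<bullet> f - \<phi> f"
proof -
  obtain R0 where R0: "\<And>f. R0 \<le> norm f \<Longrightarrow> (norm j + 1) * norm f \<le> \<phi> f"
    using coercive_bound[of "norm j + 1"] by blast
  define R where "R = max R0 \<bar>\<phi> 0\<bar>"
  have "\<exists>f\<in>cball 0 R. \<forall>f'\<in>cball 0 R. j \<bullet> f' - \<phi> f' \<le> j \<bullet> f - \<phi> f"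
    by (rule continuous_attains_sup) (auto intro!: continuous_intros continuous_phi simp: R_def)
  then obtain f where f: "\<And>f'. f' \<in> cball 0 R \<Longrightarrow> j \<bullet> f' - \<phi> f' \<le> j \<bullet> f - \<phi> f"
    by blast
  have "j \<bullet> f' - \<phi> f' \<le> j \<bullet> f - \<phi> f" for f'
  proof (cases "f' \<in> cball 0 R")
    case False
    then have "(norm j + 1) * norm f' \<le> \<phi> f'" by (intro R0) (simp add: R_def)
    moreover have "j \<bullet> f' \<le> norm j * norm f'" by (rule norm_cauchy_schwarz)
    moreover have "j \<bullet> 0 - \<phi> 0 \<le> j \<bullet> f - \<phi> f" using f[of 0] by (simp add: R_def)
    ultimately show ?thesis using False by (simp add: R_def algebra_simps)
  qed (use f in blast)
  then show ?thesis by blast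
qed

lemma bij_g: "bij g"
proof (rule bijI)
  show "inj g"
  proof (rule injI, rule ccontr)
    fix f1 f2 assume "g f1 = g f2" "f1 \<noteq> f2"
    define j where "j = g f1"
    have max: "j \<bullet> f' - \<phi> f' \<le> j \<bullet> f - \<phi> f" if "f = f1 \<or> f = f2" for f f'
      using that \<open>g f1 = g f2\<close> g_eq_iff_maximizer unfolding j_def by metis
    define c where "c = (1 - 1/2 :: real) *\<^sub>R f1 + (1/2 :: real) *\<^sub>R f2"
    have "\<phi> c < (1/2) * \<phi> f1 + (1/2) * \<phi> f2"
      using strict_convex_ineq[OF \<open>f1 \<noteq> f2\<close>, of "1/2"] by (simp add: c_def)
    moreover have "j \<bullet> c = (1/2) * (j \<bullet> f1) + (1/2) * (j \<bullet> f2)"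
      by (simp add: c_def inner_add_right)
    ultimately show False using max[of f1 c] max[of f1 f2] max[of f2 f1] by simp
  qed
  show "surj g"
    using maximizer_exists g_eq_iff_maximizer by (metis surjI)
qed

lemma inv_g_g [simp]: "inv g (g f) = f"
  using bij_g by (simp add: bij_is_inj)

lemma g_inv_g [simp]: "g (inv g j) = j"
  using bij_g by (simp add: bij_is_surj surj_f_inv_f)

lemma conj_eq: "\<Phi> j = j \<bullet> inv g j - \<phi> (inv g j)"
  unfolding LF_conj_def
  by (rule cSup_eq_maximum) (use g_eq_iff_maximizer[of "inv g j" j] in auto)

lemma fenchel_young: "j \<bullet> f - \<phi> f \<le> \<Phi> j"
  using conj_eq g_eq_iff_maximizer[of "inv g j" j] by simp

lemma fenchel_young_eq_imp: "j \<bullet> f - \<phi> f = \<Phi> j \<Longrightarrow> g f = j"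
  using fenchel_young g_eq_iff_maximizer by metis

lemma conj_subgradient: "\<Phi> j + (j' - j) \<bullet> inv g j \<le> \<Phi> j'"
  using conj_eq[of j] fenchel_young[of j' "inv g j"] by (simp add: inner_diff_left)

lemma inv_g_bounded: "\<exists>R. \<forall>j. norm j \<le> r \<longrightarrow> norm (inv g j) \<le> R"
proof -
  obtain R0 where R0: "\<And>f. R0 \<le> norm f \<Longrightarrow> (r + 1) * norm f \<le> \<phi> f"
    using coercive_bound[of "r + 1"] by blast
  have "norm (inv g j) \<le> max R0 \<bar>\<phi> 0\<bar>" if "norm j \<le> r" for j
  proof (rule ccontr)
    define f where "f = inv g j"
    assume "\<not> norm (inv g j) \<le> max R0 \<bar>\<phi> 0\<bar>"
    then have "(r + 1) * norm f \<le> \<phi> f" "\<bar>\<phi> 0\<bar> < norm f" by (auto intro: R0 simp: f_def)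
    moreover have "j \<bullet> f \<le> r * norm f"
      using norm_cauchy_schwarz[of j f] that by (meson order_trans mult_right_mono norm_ge_zero)
    moreover have "j \<bullet> 0 - \<phi> 0 \<le> j \<bullet> f - \<phi> f"
      using fenchel_young[of j 0] conj_eq[of j] by (simp add: f_def)
    ultimately show False by (simp add: algebra_simps)
  qed
  then show ?thesis by blast
qed

lemma continuous_inv_g: "continuous_on UNIV (inv g)"
proof -
  have "isCont (inv g) j0" for j0
  proof -
    obtain R where R: "\<And>j. norm j \<le> norm j0 + 1 \<Longrightarrow> norm (inv g j) \<le> R"
      using inv_g_bounded by blast
    have "continuous_on (g ` cball 0 R) (inv g)"
      by (rule continuous_on_inv) (auto intro: continuous_on_subset[OF continuous_g])
    moreover have "cball j0 1 \<subseteq> g ` cball 0 R"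
    proof
      fix j assume "j \<in> cball j0 1"
      then have "norm (j - j0) \<le> 1" by (simp add: dist_norm norm_minus_commute)
      then have "norm j \<le> norm j0 + 1" using norm_triangle_sub[of j j0] by linarith
      then have "inv g j \<in> cball 0 R" using R by simp
      then show "j \<in> g ` cball 0 R" by (metis g_inv_g image_eqI)
    qed
    ultimately have "continuous_on (cball j0 1) (inv g)" by (rule continuous_on_subset)
    then show ?thesis using continuous_on_interior[of "cball j0 1" "inv g" j0] by simp
  qed
  then show ?thesis by (simp add: continuous_at_imp_continuous_on)
qed

text \<open>Sandwiching \<open>\<Phi> (j + d) - \<Phi> j\<close> between \<open>d \<bullet> inv g j\<close> and \<open>d \<bullet> inv g (j + d)\<close>
  reduces differentiability of \<open>\<Phi>\<close> to continuity of \<open>inv g\<close>.\<close>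

lemma conj_has_derivative: "(\<Phi> has_derivative (\<lambda>d. inv g j \<bullet> d)) (at j)"
  unfolding has_derivative_at
proof
  show "bounded_linear ((\<bullet>) (inv g j))" by (rule bounded_linear_inner_right)
  have bound: "norm (\<Phi> (j + d) - \<Phi> j - inv g j \<bullet> d) / norm d \<le> norm (inv g (j + d) - inv g j)" for d
  proof (cases "d = 0")
    case False
    have "0 \<le> \<Phi> (j + d) - \<Phi> j - inv g j \<bullet> d"
      using conj_subgradient[of j "j + d"] by (simp add: inner_commute)
    moreover have "\<Phi> (j + d) - \<Phi> j - inv g j \<bullet> d \<le> d \<bullet> (inv g (j + d) - inv g j)"
      using conj_subgradient[of "j + d" j] by (simp add: inner_diff_right inner_commute)
    moreover have "d \<bullet> (inv g (j + d) - inv g j) \<le> norm d * norm (inv g (j + d) - inv g j)"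
      by (rule norm_cauchy_schwarz)
    ultimately show ?thesis using False by (simp add: divide_le_eq mult.commute)
  qed simp
  have "isCont (inv g) j" using continuous_inv_g by (simp add: continuous_on_eq_continuous_at)
  then have "((\<lambda>d. inv g (j + d) - inv g j) \<longlongrightarrow> 0) (at 0)"
    by (simp add: isCont_def LIM_offset_zero LIM_zero)
  then have "((\<lambda>d. norm (inv g (j + d) - inv g j)) \<longlongrightarrow> 0) (at 0)" by (rule tendsto_norm_zero)
  then show "((\<lambda>d. norm (\<Phi> (j + d) - \<Phi> j - inv g j \<bullet> d) / norm d) \<longlongrightarrow> 0) (at 0)"
    by (rule Lim_null_comparison[rotated]) (use bound in \<open>auto intro!: always_eventually\<close>)
qed

lemma grad_conj: "grad \<Phi> j = inv g j"
  by (rule grad_eqI[OF conj_has_derivative])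

lemma continuous_conj: "continuous_on A \<Phi>"
  by (meson continuous_at_imp_continuous_on conj_has_derivative has_derivative_continuous)

lemma conj_strict_convex_ineq:
  assumes "j1 \<noteq> j2" "0 < t" "t < 1"
  shows "\<Phi> ((1 - t) *\<^sub>R j1 + t *\<^sub>R j2) < (1 - t) * \<Phi> j1 + t * \<Phi> j2"
proof -
  define f where "f = inv g ((1 - t) *\<^sub>R j1 + t *\<^sub>R j2)"
  have "\<Phi> ((1 - t) *\<^sub>R j1 + t *\<^sub>R j2) = (1 - t) * (j1 \<bullet> f - \<phi> f) + t * (j2 \<bullet> f - \<phi> f)"
    unfolding conj_eq f_def[symmetric] by (simp add: inner_add_left algebra_simps)
  moreover have "j1 \<bullet> f - \<phi> f \<le> \<Phi> j1" "j2 \<bullet> f - \<phi> f \<le> \<Phi> j2" by (rule fenchel_young)+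
  moreover have "j1 \<bullet> f - \<phi> f < \<Phi> j1 \<or> j2 \<bullet> f - \<phi> f < \<Phi> j2"
    using fenchel_young_eq_imp[of j1 f] fenchel_young_eq_imp[of j2 f] calculation(2,3) assms(1)
    by fastforce
  ultimately show ?thesis
    using assms(2,3) by (smt (verit) mult_le_cancel_left_pos mult_less_cancel_left_pos)
qed

lemma conj_lower_bound: "0 \<le> M \<Longrightarrow> \<exists>C. \<forall>j. M * norm j - C \<le> \<Phi> j"
proof -
  assume "0 \<le> M"
  obtain f0 where "\<forall>f\<in>cball 0 M. \<phi> f \<le> \<phi> f0"
    using continuous_attains_sup[of "cball 0 M" \<phi>] \<open>0 \<le> M\<close> continuous_phi by auto
  then have C: "\<And>f. norm f \<le> M \<Longrightarrow> \<phi> f \<le> \<phi> f0" by simp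
  have "M * norm j - \<phi> f0 \<le> \<Phi> j" for j
  proof -
    define f where "f = (M / norm j) *\<^sub>R j"
    have "norm f \<le> M" using \<open>0 \<le> M\<close> by (cases "j = 0") (auto simp: f_def)
    moreover have "j \<bullet> f = M * norm j"
      by (cases "j = 0") (auto simp: f_def power2_norm_eq_inner[symmetric] power2_eq_square)
    ultimately show ?thesis using fenchel_young[of j f] C[of f] by linarith
  qed
  then show ?thesis by blast
qed

end

locale dissipation_function = legendre_function +
  assumes even: "\<And>f. \<phi> (- f) = \<phi> f"
    and zero: "\<phi> 0 = 0"
begin

lemma phi_nonneg: "0 \<le> \<phi> f"
proof -
  have "\<phi> ((1 - 1/2) *\<^sub>R f + (1/2) *\<^sub>R (- f)) \<le> (1 - 1/2) * \<phi> f + (1/2) * \<phi> (- f)"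
    using convex_onD[OF convex_phi, of "1/2" f "- f"] by simp
  then show ?thesis using zero even[of f] by (simp add: algebra_simps)
qed

lemma conj_nonneg: "0 \<le> \<Phi> j"
  using fenchel_young[of j 0] zero by simp

lemma conj_zero: "\<Phi> 0 = 0"
  using conj_eq[of 0] phi_nonneg[of "inv g 0"] conj_nonneg[of 0] by simp

lemma conj_even: "\<Phi> (- j) = \<Phi> j"
proof -
  have "\<Phi> (- j) \<le> \<Phi> j" for j
    using conj_eq[of "- j"] fenchel_young[of j "- inv g (- j)"] even[of "inv g (- j)"] by simp
  from this[of j] this[of "- j"] show ?thesis by simp
qed

end

lemma dissipation_imp_dissipation_function:
  assumes "dissipation \<phi>"
  obtains g where "dissipation_function \<phi> g"
proof -
  obtain g where "\<And>f. (\<phi> has_derivative (\<lambda>h. g f \<bullet> h)) (at f)" "continuous_on UNIV g"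
    using assms unfolding dissipation_def C1_fun_def by blast
  with assms have "dissipation_function \<phi> g"
    by unfold_locales (auto simp: dissipation_def)
  then show thesis by (rule that)
qed

(* The definitions are phrased with transpose S *v u, which the library simp rule
   would rewrite to u v* S. *)
declare transpose_matrix_vector [simp del]

lemma inner_matrix_vector_transpose:
  fixes A :: "real^'n::finite^'m::finite"
  shows "(A *v x) \<bullet> y = x \<bullet> (transpose A *v y)"
  by (metis dot_lmul_matrix vector_transpose_matrix)

lemma range_kernel_transpose_decomp:
  fixes A :: "real^'n::finite^'m::finite"
  obtains y z where "y \<in> range ((*v) A)" "transpose A *v z = 0" "u = y + z"
proof -
  define V where "V = range ((*v) A)"
  have "subspace V" unfolding V_def by (rule linear_subspace_image) (simp_all add: subspace_UNIV)
  obtain y z where yz: "y \<in> span V" "\<And>w. w \<in> span V \<Longrightarrow> orthogonal z w" "u = y + z"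
    using orthogonal_subspace_decomp_exists[of V u] by blast
  have "A *v (transpose A *v z) \<in> span V" unfolding V_def by (intro span_base rangeI)
  from yz(2)[OF this] have "z \<bullet> (A *v (transpose A *v z)) = 0" unfolding orthogonal_def .
  then have "(transpose A *v z) \<bullet> (transpose A *v z) = 0"
    using inner_matrix_vector_transpose[of A "transpose A *v z" z] by (simp add: inner_commute)
  then have "transpose A *v z = 0" by simp
  moreover have "y \<in> V" using yz(1) \<open>subspace V\<close> by (metis span_eq_iff)
  ultimately show thesis using that yz(3) unfolding V_def by simp
qed

lemma orthogonal_kernel_imp_in_range_transpose:
  fixes A :: "real^'n::finite^'m::finite"
  assumes "\<And>k. A *v k = 0 \<Longrightarrow> w \<bullet> k = 0"
  shows "\<exists>u. w = transpose A *v u"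
proof -
  obtain y z where "y \<in> range ((*v) (transpose A))" "A *v z = 0" "w = y + z"
    using range_kernel_transpose_decomp[of "transpose A" w] by auto
  then obtain u where y: "y = transpose A *v u" and "A *v z = 0" "w = y + z" by blast
  have "y \<bullet> z = 0" using inner_matrix_vector_transpose[of "transpose A" u z] \<open>A *v z = 0\<close>
    by (simp add: y)
  moreover have "w \<bullet> z = 0" using assms \<open>A *v z = 0\<close> by blast
  ultimately have "z = 0" using \<open>w = y + z\<close> by (simp add: inner_add_left)
  then show ?thesis using \<open>w = y + z\<close> y by auto
qed

lemma transpose_bounded_below_on_range:
  fixes A :: "real^'n::finite^'m::finite"
  obtains e where "e > 0" "\<And>x. x \<in> range ((*v) A) \<Longrightarrow> e * norm x \<le> norm (transpose A *v x)"
proof -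
  have sub: "subspace (range ((*v) A))" by (rule linear_subspace_image) (simp_all add: subspace_UNIV)
  have "x = 0" if x: "x \<in> range ((*v) A)" "transpose A *v x = 0" for x
  proof -
    obtain j where "x = A *v j" using x(1) by auto
    then have "x \<bullet> x = 0" using x(2) inner_matrix_vector_transpose[of A j x] by simp
    then show ?thesis by simp
  qed
  then obtain e where "e > 0" "\<forall>x\<in>range ((*v) A). e * norm x \<le> norm (transpose A *v x)"
    using injective_imp_isometric[OF closed_subspace[OF sub] sub, of "(*v) (transpose A)"] by auto
  then show thesis using that by blast
qed

lemma mem_tang_iff: "v \<in> tang S \<longleftrightarrow> (\<exists>j. - (S *v j) = v)"
  unfolding tang_def by (metis (mono_tags) linear_neg matrix_vector_mul_linear minus_minus rangeE rangeI)

lemma subspace_tang: "subspace (tang S)"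
  unfolding tang_def by (rule linear_subspace_image) (simp_all add: subspace_UNIV)

lemma rep_qcls: "rep (qcls S u) \<in> qcls S u"
  unfolding rep_def by (rule someI[of _ u]) (simp add: qcls_def)

lemma transpose_rep_qcls [simp]: "transpose S *v rep (qcls S u) = transpose S *v u"
  using rep_qcls[of S u] by (simp add: qcls_def)

lemma qcls_eq_iff: "qcls S u = qcls S u' \<longleftrightarrow> transpose S *v u = transpose S *v u'"
  by (metis transpose_rep_qcls qcls_def)

lemma qcls_rep: "U \<in> cotang S \<Longrightarrow> qcls S (rep U) = U"
  unfolding cotang_def using qcls_eq_iff transpose_rep_qcls by blast

lemma qnorm_qcls_nonneg: "0 \<le> qnorm (qcls S u)"
  unfolding qnorm_def by (rule cInf_greatest) (auto simp: qcls_def)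

lemma qnorm_qcls_le: "transpose S *v y = transpose S *v u \<Longrightarrow> qnorm (qcls S u) \<le> norm y"
  unfolding qnorm_def by (rule cInf_lower) (auto simp: qcls_def intro: bdd_belowI[of _ 0])

text \<open>\<open>Im S\<close> is a complement of \<open>Ker S\<^sup>T\<close> on which \<open>S\<^sup>T\<close> is injective.\<close>

lemma qnorm_le_norm_transpose:
  obtains e where "e > 0" "\<And>u. e * qnorm (qcls S u) \<le> norm (transpose S *v u)"
proof -
  obtain e where e: "e > 0" "\<And>x. x \<in> range ((*v) S) \<Longrightarrow> e * norm x \<le> norm (transpose S *v x)"
    using transpose_bounded_below_on_range by blast
  have "e * qnorm (qcls S u) \<le> norm (transpose S *v u)" for u
  proof -
    obtain y z where y: "y \<in> range ((*v) S)" and "transpose S *v z = 0" "u = y + z"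
      using range_kernel_transpose_decomp by blast
    then have Ty: "transpose S *v y = transpose S *v u" by (simp add: matrix_vector_right_distrib)
    then have "e * qnorm (qcls S u) \<le> e * norm y" using qnorm_qcls_le \<open>e > 0\<close> by simp
    also have "\<dots> \<le> norm (transpose S *v u)" using e(2)[OF y] Ty by simp
    finally show ?thesis .
  qed
  then show thesis using that e(1) by blast
qed

lemma inner_neg_matrix_vector:
  fixes S :: "real^'e::finite^'x::finite"
  shows "(- (S *v j)) \<bullet> u = j \<bullet> (- (transpose S *v u))"
  using inner_matrix_vector_transpose[of S j u] by simp

locale legendre_restriction = legendre_function \<phi> g
  for \<phi> :: "real^'e::finite \<Rightarrow> real" and g +
  fixes S :: "real^'e^'x::finite"
begin

lemma is_jdag_iff: "is_jdag \<Phi> S v j \<longleftrightarrow> - (S *v j) = v \<and> (\<exists>u. inv g j = - (transpose S *v u))"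
proof
  assume min: "is_jdag \<Phi> S v j"
  have "inv g j \<bullet> k = 0" if "S *v k = 0" for k
  proof -
    define p where "p = (\<lambda>t :: real. \<Phi> (j + t *\<^sub>R k))"
    have "((\<lambda>t. j + t *\<^sub>R k) has_derivative (\<lambda>t. t *\<^sub>R k)) (at 0)"
      by (auto intro!: derivative_eq_intros)
    from has_derivative_compose[OF this conj_has_derivative]
    have deriv: "(p has_derivative (\<lambda>t. inv g j \<bullet> (t *\<^sub>R k))) (at 0)"
      by (simp add: p_def o_def)
    have "- (S *v (j + t *\<^sub>R k)) = v" for t
      using min \<open>S *v k = 0\<close> by (simp add: is_jdag_def matrix_vector_right_distrib matrix_vector_mult_scaleR)
    then have "p 0 \<le> p t" for t using min by (simp add: is_jdag_def p_def)
    then have "(\<lambda>t. inv g j \<bullet> (t *\<^sub>R k)) = (\<lambda>t. 0)"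
      by (intro differential_zero_maxmin[OF _ _ deriv, of UNIV]) auto
    from fun_cong[OF this, of 1] show ?thesis by simp
  qed
  then obtain u where "inv g j = transpose S *v u"
    using orthogonal_kernel_imp_in_range_transpose by blast
  then have "inv g j = - (transpose S *v (- u))" by (simp add: linear_neg)
  with min show "- (S *v j) = v \<and> (\<exists>u. inv g j = - (transpose S *v u))"
    unfolding is_jdag_def by blast
next
  assume "- (S *v j) = v \<and> (\<exists>u. inv g j = - (transpose S *v u))"
  then obtain u where j: "- (S *v j) = v" and u: "inv g j = - (transpose S *v u)" by blast
  have "\<Phi> j \<le> \<Phi> j'" if "- (S *v j') = v" for j'
  proof -
    have "(j' - j) \<bullet> inv g j = (- (S *v (j' - j))) \<bullet> u"
      using inner_neg_matrix_vector[of S "j' - j" u] u by simp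
    also have "\<dots> = 0"
    proof -
      have "S *v j' = S *v j" using j that by (metis neg_equal_iff_equal)
      then show ?thesis by (simp add: matrix_vector_mult_diff_distrib)
    qed
    finally show ?thesis using conj_subgradient[of j j'] by simp
  qed
  with j show "is_jdag \<Phi> S v j" unfolding is_jdag_def by blast
qed

lemma jdag_exists: "v \<in> tang S \<Longrightarrow> \<exists>j. is_jdag \<Phi> S v j"
proof -
  assume "v \<in> tang S"
  then obtain j0 where j0: "- (S *v j0) = v" using mem_tang_iff by blast
  obtain C where C: "\<And>j. 1 * norm j - C \<le> \<Phi> j" using conj_lower_bound[of 1] by auto
  define L where "L = {j. - (S *v j) = v} \<inter> cball 0 (max (norm j0) (\<Phi> j0 + C))"
  have "compact L" unfolding L_def
    by (intro closed_Int_compact compact_cball closed_Collect_eq continuous_intros)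
  moreover have "j0 \<in> L" using j0 by (simp add: L_def)
  ultimately obtain j where "j \<in> L" and min: "\<And>j'. j' \<in> L \<Longrightarrow> \<Phi> j \<le> \<Phi> j'"
    using continuous_attains_inf[of L \<Phi>] continuous_conj by blast
  have "\<Phi> j \<le> \<Phi> j'" if "- (S *v j') = v" for j'
  proof (cases "j' \<in> L")
    case False
    then have "\<Phi> j0 + C < norm j'" using that by (auto simp: L_def)
    then show ?thesis using min[OF \<open>j0 \<in> L\<close>] C[of j'] by simp
  qed (rule min)
  with \<open>j \<in> L\<close> show ?thesis unfolding is_jdag_def L_def by blast
qed

lemma jdag_unique: "is_jdag \<Phi> S v j1 \<Longrightarrow> is_jdag \<Phi> S v j2 \<Longrightarrow> j1 = j2"
proof (rule ccontr)
  assume min: "is_jdag \<Phi> S v j1" "is_jdag \<Phi> S v j2" and "j1 \<noteq> j2"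
  define c where "c = (1 - 1/2 :: real) *\<^sub>R j1 + (1/2 :: real) *\<^sub>R j2"
  have "S *v j1 = - v" "S *v j2 = - v" using min unfolding is_jdag_def by auto
  then have "- (S *v c) = v"
    by (simp add: c_def matrix_vector_right_distrib matrix_vector_mult_scaleR flip: scaleR_left_distrib)
  then have "\<Phi> j1 \<le> \<Phi> c" using min(1) unfolding is_jdag_def by blast
  moreover have "\<Phi> c < (1/2) * \<Phi> j1 + (1/2) * \<Phi> j2"
    using conj_strict_convex_ineq[OF \<open>j1 \<noteq> j2\<close>, of "1/2"] by (simp add: c_def)
  moreover have "\<Phi> j1 = \<Phi> j2" using min unfolding is_jdag_def by (metis order_antisym)
  ultimately show False by simp
qed

lemma ex1_jdag: "v \<in> tang S \<Longrightarrow> \<exists>!j. is_jdag \<Phi> S v j"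
  using jdag_exists jdag_unique by blast

lemma jdag_eqI: "is_jdag \<Phi> S v j \<Longrightarrow> jdag \<Phi> S v = j"
  unfolding jdag_def using jdag_unique by blast

lemma is_jdag_jdag: "v \<in> tang S \<Longrightarrow> is_jdag \<Phi> S v (jdag \<Phi> S v)"
  using jdag_exists jdag_eqI by blast

lemma jdag_fibre: "v \<in> tang S \<Longrightarrow> - (S *v jdag \<Phi> S v) = v"
  using is_jdag_jdag unfolding is_jdag_def by blast

lemma jdag_min: "v \<in> tang S \<Longrightarrow> - (S *v j) = v \<Longrightarrow> \<Phi> (jdag \<Phi> S v) \<le> \<Phi> j"
  using is_jdag_jdag unfolding is_jdag_def by blast

lemma jdag_g: "jdag \<Phi> S (- (S *v g (- (transpose S *v u)))) = g (- (transpose S *v u))"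
  by (rule jdag_eqI) (auto simp: is_jdag_iff)

lemma ex1_dtPsi:
  assumes "v \<in> tang S"
  shows "\<exists>!U. U \<in> cotang S \<and> grad \<Phi> (jdag \<Phi> S v) = - (transpose S *v rep U)"
proof -
  obtain u where u: "inv g (jdag \<Phi> S v) = - (transpose S *v u)"
    using is_jdag_jdag[OF assms] is_jdag_iff by blast
  show ?thesis
  proof (rule ex1I[of _ "qcls S u"])
    show "qcls S u \<in> cotang S \<and> grad \<Phi> (jdag \<Phi> S v) = - (transpose S *v rep (qcls S u))"
      using u by (simp add: cotang_def grad_conj)
  next
    fix U assume "U \<in> cotang S \<and> grad \<Phi> (jdag \<Phi> S v) = - (transpose S *v rep U)"
    then show "U = qcls S u" using u qcls_rep[of U] by (metis grad_conj neg_equal_iff_equal qcls_eq_iff)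
  qed
qed

lemma dtPsi_in_cotang: "v \<in> tang S \<Longrightarrow> dtPsi \<Phi> S v \<in> cotang S"
  using theI'[OF ex1_dtPsi] unfolding dtPsi_def by blast

lemma inv_g_jdag: "v \<in> tang S \<Longrightarrow> inv g (jdag \<Phi> S v) = - (transpose S *v rep (dtPsi \<Phi> S v))"
  using theI'[OF ex1_dtPsi] unfolding dtPsi_def grad_conj by blast

lemma dtPsi_eqI:
  "v \<in> tang S \<Longrightarrow> U \<in> cotang S \<Longrightarrow> inv g (jdag \<Phi> S v) = - (transpose S *v rep U) \<Longrightarrow> dtPsi \<Phi> S v = U"
  using the1_equality[OF ex1_dtPsi] unfolding dtPsi_def grad_conj by blast

lemma tPsi_is_max:
  assumes v: "v \<in> tang S"
  shows "is_max_of (cotang S) (\<lambda>U. dpair v U - tPsistar \<phi> S U) (tPsi \<Phi> S v)"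
proof -
  define j where "j = jdag \<Phi> S v"
  have pair: "dpair v U = j \<bullet> (- (transpose S *v rep U))" for U
    using jdag_fibre[OF v] inner_neg_matrix_vector[of S j "rep U"] by (simp add: dpair_def j_def)
  show ?thesis unfolding is_max_of_def
  proof (intro conjI ballI bexI)
    show "dpair v (dtPsi \<Phi> S v) - tPsistar \<phi> S (dtPsi \<Phi> S v) = tPsi \<Phi> S v"
      using pair conj_eq[of j] inv_g_jdag[OF v] by (simp add: tPsistar_def tPsi_def j_def)
    show "dtPsi \<Phi> S v \<in> cotang S" by (rule dtPsi_in_cotang[OF v])
  next
    fix U show "dpair v U - tPsistar \<phi> S U \<le> tPsi \<Phi> S v"
      using pair[of U] fenchel_young[of j "- (transpose S *v rep U)"] by (simp add: tPsistar_def tPsi_def j_def)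
  qed
qed

lemma tPsistar_is_max:
  "is_max_of (tang S) (\<lambda>v. dpair v U - tPsi \<Phi> S v) (tPsistar \<phi> S U)"
proof -
  define f where "f = - (transpose S *v rep U)"
  have pair: "dpair (- (S *v j)) U = j \<bullet> f" for j
    using inner_neg_matrix_vector by (simp add: dpair_def f_def)
  show ?thesis unfolding is_max_of_def
  proof (intro conjI ballI bexI)
    show "dpair (- (S *v g f)) U - tPsi \<Phi> S (- (S *v g f)) = tPsistar \<phi> S U"
      using pair[of "g f"] conj_eq[of "g f"] jdag_g[of "rep U"] by (simp add: tPsi_def tPsistar_def f_def)
    show "- (S *v g f) \<in> tang S" using mem_tang_iff by blast
  next
    fix v assume v: "v \<in> tang S"
    have "dpair v U = jdag \<Phi> S v \<bullet> f" using pair[of "jdag \<Phi> S v"] jdag_fibre[OF v] by simp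
    then show "dpair v U - tPsi \<Phi> S v \<le> tPsistar \<phi> S U"
      using fenchel_young[of "jdag \<Phi> S v" f] by (simp add: tPsi_def tPsistar_def f_def)
  qed
qed

text \<open>\<open>tPsi\<close> is squeezed between its supporting line \<open>t \<mapsto> tPsi v + t \<langle>w, dtPsi v\<rangle>\<close> from
  Fenchel--Young and the smooth majorant \<open>t \<mapsto> \<Phi> (jdag v + t k)\<close> with \<open>- S k = w\<close>.\<close>

lemma tPsi_has_derivative:
  assumes v: "v \<in> tang S" and w: "w \<in> tang S"
  shows "((\<lambda>t. tPsi \<Phi> S (v + t *\<^sub>R w)) has_real_derivative dpair w (dtPsi \<Phi> S v)) (at 0)"
proof -
  define j where "j = jdag \<Phi> S v"
  define r where "r = rep (dtPsi \<Phi> S v)"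
  have jv: "- (S *v j) = v" using jdag_fibre[OF v] by (simp add: j_def)
  have hj: "inv g j = - (transpose S *v r)" using inv_g_jdag[OF v] by (simp add: j_def r_def)
  obtain k where k: "- (S *v k) = w" using w mem_tang_iff by blast
  have vw: "v + t *\<^sub>R w \<in> tang S" for t
    using v w by (meson subspace_add subspace_scale subspace_tang)
  define p where "p = (\<lambda>t. tPsi \<Phi> S (v + t *\<^sub>R w))"
  define q where "q = (\<lambda>t :: real. \<Phi> (j + t *\<^sub>R k))"
  have "j \<bullet> inv g j = v \<bullet> r"
    using inner_neg_matrix_vector[of S j r] unfolding jv hj[symmetric] by simp
  then have p0: "p 0 = v \<bullet> r - \<phi> (inv g j)"
    using conj_eq[of j] by (simp add: p_def tPsi_def j_def)
  have "p 0 + t * (w \<bullet> r) \<le> p t" for t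
  proof -
    define j' where "j' = jdag \<Phi> S (v + t *\<^sub>R w)"
    have "j' \<bullet> inv g j = (v + t *\<^sub>R w) \<bullet> r"
      using inner_neg_matrix_vector[of S j' r] jdag_fibre[OF vw] hj by (simp add: j'_def)
    then show ?thesis
      using fenchel_young[of j' "inv g j"] p0 by (simp add: p_def tPsi_def j'_def inner_add_left)
  qed
  moreover have "p t \<le> q t" for t
  proof -
    have "- (S *v (j + t *\<^sub>R k)) = v + t *\<^sub>R w"
      using jv k by (auto simp: matrix_vector_right_distrib matrix_vector_mult_scaleR)
    then show ?thesis using jdag_min[OF vw] by (simp add: p_def q_def tPsi_def)
  qed
  moreover have "q 0 = p 0" by (simp add: q_def p_def tPsi_def j_def)
  moreover have "(q has_real_derivative w \<bullet> r) (at 0)"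
  proof -
    have "((\<lambda>t. j + t *\<^sub>R k) has_derivative (\<lambda>t. t *\<^sub>R k)) (at 0)"
      by (auto intro!: derivative_eq_intros)
    from has_derivative_compose[OF this conj_has_derivative]
    have "(q has_derivative (\<lambda>t. t * (inv g j \<bullet> k))) (at 0)" by (simp add: q_def o_def)
    moreover have "inv g j \<bullet> k = w \<bullet> r"
      using inner_neg_matrix_vector[of S k r] k hj by (simp add: inner_commute)
    ultimately show ?thesis by (simp add: has_field_derivative_def mult_commute_abs)
  qed
  ultimately show ?thesis unfolding p_def dpair_def r_def by (rule DERIV_squeeze_at_0)
qed

lemma tPsistar_has_derivative:
  "((\<lambda>t. tPsistar \<phi> S (qcls S (rep U + t *\<^sub>R rep W))) has_real_derivative (dtPsistar \<phi> S U \<bullet> rep W)) (at 0)"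
proof -
  define a where "a = - (transpose S *v rep U)"
  define b where "b = transpose S *v rep W"
  have eq: "(\<lambda>t. tPsistar \<phi> S (qcls S (rep U + t *\<^sub>R rep W))) = (\<lambda>t. \<phi> (a - t *\<^sub>R b))"
    by (simp add: tPsistar_def a_def b_def matrix_vector_right_distrib matrix_vector_mult_scaleR algebra_simps)
  have "((\<lambda>t. a - t *\<^sub>R b) has_derivative (\<lambda>t. - (t *\<^sub>R b))) (at 0)"
    by (auto intro!: derivative_eq_intros)
  from has_derivative_compose[OF this has_derivative_g]
  have "((\<lambda>t. \<phi> (a - t *\<^sub>R b)) has_derivative (\<lambda>t. - (t * (g a \<bullet> b)))) (at 0)"
    by (simp add: o_def)
  moreover have "(\<lambda>t. - (t * (g a \<bullet> b))) = (*) (- (g a \<bullet> b))" by auto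
  moreover have "dtPsistar \<phi> S U \<bullet> rep W = - (g a \<bullet> b)"
    using inner_matrix_vector_transpose[of S "g a" "rep W"]
    by (simp add: dtPsistar_def grad_phi a_def b_def)
  ultimately show ?thesis unfolding eq by (simp add: has_field_derivative_def)
qed

lemma dtPsistar_in_tang: "dtPsistar \<phi> S U \<in> tang S"
  unfolding dtPsistar_def using mem_tang_iff by blast

lemma dtPsistar_dtPsi: "v \<in> tang S \<Longrightarrow> dtPsistar \<phi> S (dtPsi \<Phi> S v) = v"
  unfolding dtPsistar_def grad_phi by (metis inv_g_jdag g_inv_g jdag_fibre)

lemma dtPsi_dtPsistar: "U \<in> cotang S \<Longrightarrow> dtPsi \<Phi> S (dtPsistar \<phi> S U) = U"
  unfolding dtPsistar_def grad_phi
  by (rule dtPsi_eqI) (auto simp: jdag_g mem_tang_iff)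

lemma bij_betw_dtPsi: "bij_betw (dtPsi \<Phi> S) (tang S) (cotang S)"
  by (rule bij_betw_byWitness[where f'="dtPsistar \<phi> S"])
    (auto simp: dtPsistar_dtPsi dtPsi_dtPsistar dtPsistar_in_tang dtPsi_in_cotang)

lemma bij_betw_dtPsistar: "bij_betw (dtPsistar \<phi> S) (cotang S) (tang S)"
  by (rule bij_betw_byWitness[where f'="dtPsi \<Phi> S"])
    (auto simp: dtPsistar_dtPsi dtPsi_dtPsistar dtPsistar_in_tang dtPsi_in_cotang)

lemma tPsi_strictly_convex: "strictly_convex_on (tang S) (tPsi \<Phi> S)"
  unfolding strictly_convex_on_def
proof (intro ballI impI allI)
  fix v1 v2 and t :: real
  assume v: "v1 \<in> tang S" "v2 \<in> tang S" "v1 \<noteq> v2" and t: "0 < t \<and> t < 1"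
  define j1 where "j1 = jdag \<Phi> S v1"
  define j2 where "j2 = jdag \<Phi> S v2"
  have j1: "- (S *v j1) = v1" and j2: "- (S *v j2) = v2" using jdag_fibre v by (auto simp: j1_def j2_def)
  define vt where "vt = (1 - t) *\<^sub>R v1 + t *\<^sub>R v2"
  have fibre: "- (S *v ((1 - t) *\<^sub>R j1 + t *\<^sub>R j2)) = vt"
    using j1 j2 by (auto simp: vt_def matrix_vector_right_distrib matrix_vector_mult_scaleR)
  then have "tPsi \<Phi> S vt \<le> \<Phi> ((1 - t) *\<^sub>R j1 + t *\<^sub>R j2)"
    unfolding tPsi_def by (intro jdag_min) (auto simp: mem_tang_iff)
  also have "\<dots> < (1 - t) * \<Phi> j1 + t * \<Phi> j2"
  proof (rule conj_strict_convex_ineq)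
    show "j1 \<noteq> j2" using j1 j2 v(3) by auto
  qed (use t in auto)
  finally show "tPsi \<Phi> S ((1 - t) *\<^sub>R v1 + t *\<^sub>R v2) < (1 - t) * tPsi \<Phi> S v1 + t * tPsi \<Phi> S v2"
    by (simp add: vt_def tPsi_def j1_def j2_def)
qed

lemma tPsi_coercive: "\<exists>R. \<forall>v\<in>tang S. R \<le> norm v \<longrightarrow> M * norm v \<le> tPsi \<Phi> S v"
proof -
  obtain K where K: "K > 0" "\<And>j. norm (S *v j) \<le> norm j * K"
    using bounded_linear.pos_bounded[OF matrix_vector_mul_bounded_linear[of S]] by blast
  define M' where "M' = max M 0 + 1"
  obtain C where C: "\<And>j. (M' * K) * norm j - C \<le> \<Phi> j"
    using conj_lower_bound[of "M' * K"] K(1) by (auto simp: M'_def)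
  have "M * norm v \<le> tPsi \<Phi> S v" if v: "v \<in> tang S" "C \<le> norm v" for v
  proof -
    define j where "j = jdag \<Phi> S v"
    have "norm v \<le> norm j * K"
      using K(2)[of j] jdag_fibre[OF v(1)] unfolding j_def by (metis norm_minus_cancel)
    then have "M' * norm v \<le> M' * (norm j * K)" by (rule mult_left_mono) (simp add: M'_def)
    then have "M' * norm v \<le> (M' * K) * norm j" by (simp add: ac_simps)
    moreover have "M * norm v \<le> (M' - 1) * norm v" by (rule mult_right_mono) (auto simp: M'_def)
    ultimately show ?thesis using C[of j] v(2) by (simp add: tPsi_def j_def algebra_simps)
  qed
  then show ?thesis by blast
qed

lemma tPsistar_strict_convex_ineq:
  assumes "U \<in> cotang S" "U' \<in> cotang S" "U \<noteq> U'" "0 < t" "t < 1"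
  shows "tPsistar \<phi> S (qcls S ((1 - t) *\<^sub>R rep U + t *\<^sub>R rep U'))
           < (1 - t) * tPsistar \<phi> S U + t * tPsistar \<phi> S U'"
proof -
  have "transpose S *v rep U \<noteq> transpose S *v rep U'"
    using assms(1-3) qcls_rep qcls_eq_iff by metis
  then have "- (transpose S *v rep U) \<noteq> - (transpose S *v rep U')" by simp
  from strict_convex_ineq[OF this assms(4,5)] show ?thesis
    by (simp add: tPsistar_def matrix_vector_right_distrib matrix_vector_mult_scaleR)
qed

lemma tPsistar_coercive: "\<exists>R. \<forall>U\<in>cotang S. R \<le> qnorm U \<longrightarrow> M * qnorm U \<le> tPsistar \<phi> S U"
proof -
  obtain e where e: "e > 0" "\<And>u. e * qnorm (qcls S u) \<le> norm (transpose S *v u)"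
    using qnorm_le_norm_transpose by blast
  define M' where "M' = max M 0"
  obtain R where R: "\<And>f. R \<le> norm f \<Longrightarrow> (M' / e) * norm f \<le> \<phi> f"
    using coercive_bound[of "M' / e"] by blast
  have "M * qnorm U \<le> tPsistar \<phi> S U" if U: "U \<in> cotang S" "R / e \<le> qnorm U" for U
  proof -
    define f where "f = - (transpose S *v rep U)"
    have bound: "e * qnorm U \<le> norm f" using e(2)[of "rep U"] qcls_rep[OF U(1)] by (simp add: f_def)
    moreover have "R \<le> e * qnorm U" using U(2) e(1) by (simp add: divide_le_eq mult.commute)
    ultimately have "(M' / e) * norm f \<le> tPsistar \<phi> S U" using R[of f] by (simp add: tPsistar_def f_def)
    moreover have "(M' / e) * (e * qnorm U) \<le> (M' / e) * norm f"
      using bound e(1) by (intro mult_left_mono) (auto simp: M'_def)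
    moreover have "M * qnorm U \<le> M' * qnorm U"
      using qnorm_qcls_nonneg[of S "rep U"] qcls_rep[OF U(1)] by (simp add: M'_def mult_right_mono)
    ultimately show ?thesis using e(1) by simp
  qed
  then show ?thesis by blast
qed

end

locale dissipation_restriction = legendre_restriction \<phi> g S + dissipation_function \<phi> g
  for \<phi> :: "real^'e::finite \<Rightarrow> real" and g and S :: "real^'e^'x::finite"
begin

lemma tPsi_even: "v \<in> tang S \<Longrightarrow> tPsi \<Phi> S (- v) = tPsi \<Phi> S v"
proof -
  assume v: "v \<in> tang S"
  define j where "j = jdag \<Phi> S v"
  have "is_jdag \<Phi> S (- v) (- j)"
    unfolding is_jdag_def
  proof (intro conjI allI impI)
    show "- (S *v - j) = - v" using jdag_fibre[OF v] by (simp add: j_def linear_neg)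
    fix j' assume "- (S *v j') = - v"
    then have "- (S *v - j') = v" by (simp add: linear_neg)
    from jdag_min[OF v this] show "\<Phi> (- j) \<le> \<Phi> j'"
      using conj_even[of j] conj_even[of j'] by (simp add: j_def)
  qed
  then show ?thesis using jdag_eqI conj_even by (simp add: tPsi_def j_def)
qed

lemma tPsi_zero: "tPsi \<Phi> S 0 = 0"
proof -
  have "is_jdag \<Phi> S 0 0" unfolding is_jdag_def by (simp add: conj_zero conj_nonneg)
  then show ?thesis using jdag_eqI conj_zero by (simp add: tPsi_def)
qed

lemma tPsistar_even: "tPsistar \<phi> S (qcls S (- rep U)) = tPsistar \<phi> S U"
  by (simp add: tPsistar_def linear_neg even)

lemma tPsistar_zero: "tPsistar \<phi> S (qcls S 0) = 0"
  by (simp add: tPsistar_def zero)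

end

theorem mainTheorem8:
  fixes S :: "real^'e::finite^'x::finite"
    and psistar :: "real^'x \<Rightarrow> real^'e \<Rightarrow> real"
    and x :: "real^'x"
  assumes S_int: "\<forall>i k. S $ i $ k \<in> \<int>"
    and diss: "\<forall>y. (\<forall>i. 0 < y $ i) \<longrightarrow> dissipation (psistar y)"
    and x_pos: "\<forall>i. 0 < x $ i"
  defines "\<Psi>s \<equiv> psistar x"
    and "\<Psi> \<equiv> LF_conj (psistar x)"
  shows
    \<comment> \<open>j-dagger is well defined\<close>
    "(\<forall>v\<in>tang S. \<exists>!j. is_jdag \<Psi> S v j)
    \<comment> \<open>Legendre-Fenchel duality\<close>
     \<and> (\<forall>v\<in>tang S. is_max_of (cotang S) (\<lambda>U. dpair v U - tPsistar \<Psi>s S U) (tPsi \<Psi> S v))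
     \<and> (\<forall>U\<in>cotang S. is_max_of (tang S) (\<lambda>v. dpair v U - tPsi \<Psi> S v) (tPsistar \<Psi>s S U))
    \<comment> \<open>the Legendre maps are well defined, are the derivatives, and are mutually inverse bijections\<close>
     \<and> (\<forall>v\<in>tang S. dtPsi \<Psi> S v \<in> cotang S
            \<and> grad \<Psi> (jdag \<Psi> S v) = - (transpose S *v rep (dtPsi \<Psi> S v)))
     \<and> (\<forall>v\<in>tang S. \<forall>w\<in>tang S.
            ((\<lambda>t. tPsi \<Psi> S (v + t *\<^sub>R w)) has_real_derivative dpair w (dtPsi \<Psi> S v)) (at 0))
     \<and> (\<forall>U\<in>cotang S. \<forall>W\<in>cotang S.
            ((\<lambda>t. tPsistar \<Psi>s S (qcls S (rep U + t *\<^sub>R rep W)))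
               has_real_derivative (dtPsistar \<Psi>s S U \<bullet> rep W)) (at 0))
     \<and> bij_betw (dtPsi \<Psi> S) (tang S) (cotang S)
     \<and> bij_betw (dtPsistar \<Psi>s S) (cotang S) (tang S)
     \<and> (\<forall>v\<in>tang S. dtPsistar \<Psi>s S (dtPsi \<Psi> S v) = v)
     \<and> (\<forall>U\<in>cotang S. dtPsi \<Psi> S (dtPsistar \<Psi>s S U) = U)
    \<comment> \<open>tilde Psi is a dissipation function on Im S\<close>
     \<and> strictly_convex_on (tang S) (tPsi \<Psi> S)
     \<and> (\<forall>M. \<exists>R. \<forall>v\<in>tang S. R \<le> norm v \<longrightarrow> M * norm v \<le> tPsi \<Psi> S v)
     \<and> (\<forall>v\<in>tang S. tPsi \<Psi> S (- v) = tPsi \<Psi> S v)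
     \<and> tPsi \<Psi> S 0 = 0
    \<comment> \<open>tilde Psi^* is a dissipation function on R^{N_X} / Ker S^T\<close>
     \<and> (\<forall>U\<in>cotang S. \<forall>U'\<in>cotang S. U \<noteq> U' \<longrightarrow>
          (\<forall>t::real. 0 < t \<and> t < 1 \<longrightarrow>
             tPsistar \<Psi>s S (qcls S ((1 - t) *\<^sub>R rep U + t *\<^sub>R rep U'))
               < (1 - t) * tPsistar \<Psi>s S U + t * tPsistar \<Psi>s S U'))
     \<and> (\<forall>M. \<exists>R. \<forall>U\<in>cotang S. R \<le> qnorm U \<longrightarrow> M * qnorm U \<le> tPsistar \<Psi>s S U)
     \<and> (\<forall>U\<in>cotang S. tPsistar \<Psi>s S (qcls S (- rep U)) = tPsistar \<Psi>s S U)
     \<and> tPsistar \<Psi>s S (qcls S 0) = 0"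
proof -
  obtain g where "dissipation_function (psistar x) g"
    using dissipation_imp_dissipation_function diss x_pos by blast
  then interpret dissipation_restriction "psistar x" g S
    by (simp add: dissipation_restriction_def legendre_restriction_def dissipation_function_def)
  show ?thesis
    unfolding \<Psi>s_def \<Psi>_def grad_conj
    using ex1_jdag tPsi_is_max tPsistar_is_max dtPsi_in_cotang inv_g_jdag tPsi_has_derivative
      tPsistar_has_derivative bij_betw_dtPsi bij_betw_dtPsistar dtPsistar_dtPsi dtPsi_dtPsistar
      tPsi_strictly_convex tPsi_coercive tPsi_even tPsi_zero tPsistar_strict_convex_ineq
      tPsistar_coercive tPsistar_even tPsistar_zero
    by simp
qed

end
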